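(* If TDS is undecidable, then the reachability problem of one-dimensional piecewise affine maps is undecidable.
   Context: An instance of TDS consists of a rational discount factor $0<\lambda<1$, a rational target $t$, and rational weights $a,b$; it asks whether there exists $w\in\{a,b\}^\omega$ with $\sum_{i=0}^\infty w(i)\lambda^i=t$. A one-dimensional piecewise affine map is a function $f:\mathbb R\to\mathbb R$ whose domain is partitioned into finitely many disjoint intervals (sections, with rational endpoints), such that on the $i$-th section $f(x)=a_ix+b_i$ with rational $a_i\neq 0$ and rational $b_i$. The reachability problem asks, given such $f$ and rational points $s,t$, whether there exists $n\in\mathbb N$ with $f^n(s)=t$. *)

theory Defs
  imports Complex_Main "HOL-Library.Nat_Bijection"
begin

datatype recf = Zf | Sf | Proj nat | Cn recf "recf list" | Pr recf recf | Mn recf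

inductive rec_eval :: "recf \<Rightarrow> nat list \<Rightarrow> nat \<Rightarrow> bool" where
  zero: "rec_eval Zf xs 0"
| succ: "rec_eval Sf (x # xs) (Suc x)"
| proj: "i < length xs \<Longrightarrow> rec_eval (Proj i) xs (xs ! i)"
| comp: "list_all2 (\<lambda>f y. rec_eval f xs y) fs ys \<Longrightarrow> rec_eval g ys z
          \<Longrightarrow> rec_eval (Cn g fs) xs z"
| prim0: "rec_eval f xs y \<Longrightarrow> rec_eval (Pr f g) (0 # xs) y"
| primS: "rec_eval (Pr f g) (n # xs) y \<Longrightarrow> rec_eval g (n # y # xs) z
          \<Longrightarrow> rec_eval (Pr f g) (Suc n # xs) z"
| mu: "rec_eval f (n # xs) 0 \<Longrightarrow> (\<forall>m<n. \<exists>k. rec_eval f (m # xs) (Suc k))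
          \<Longrightarrow> rec_eval (Mn f) xs n"

definition decidable :: "nat set \<Rightarrow> bool" where
  "decidable A \<longleftrightarrow> (\<exists>p. \<forall>n. rec_eval p [n] (if n \<in> A then 1 else 0))"

definition rat_code :: "rat \<Rightarrow> nat" where
  "rat_code q = prod_encode (int_encode (fst (quotient_of q)), int_encode (snd (quotient_of q)))"

definition tds_code :: "rat \<Rightarrow> rat \<Rightarrow> rat \<Rightarrow> rat \<Rightarrow> nat" where
  "tds_code l t a b = list_encode (map rat_code [l, t, a, b])"

definition tds_yes :: "rat \<Rightarrow> rat \<Rightarrow> rat \<Rightarrow> rat \<Rightarrow> bool" where
  "tds_yes l t a b \<longleftrightarrow> 0 < l \<and> l < 1 \<and>
     (\<exists>w :: nat \<Rightarrow> real. (\<forall>i. w i \<in> {of_rat a, of_rat b}) \<and>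
        (\<lambda>i. w i * (of_rat l) ^ i) sums (of_rat t))"

definition TDS :: "nat set" where
  "TDS = {tds_code l t a b | l t a b. tds_yes l t a b}"

text \<open>An interval endpoint: None = unbounded; Some (q, True) = closed at q;
  Some (q, False) = open at q.  A section is (lower, upper, a_i, b_i).\<close>
type_synonym bound = "(rat \<times> bool) option"
type_synonym pam_section = "bound \<times> bound \<times> rat \<times> rat"

fun above_lo :: "bound \<Rightarrow> real \<Rightarrow> bool" where
  "above_lo None x = True"
| "above_lo (Some (q, c)) x = (if c then of_rat q \<le> x else of_rat q < x)"

fun below_hi :: "bound \<Rightarrow> real \<Rightarrow> bool" where
  "below_hi None x = True"
| "below_hi (Some (q, c)) x = (if c then x \<le> of_rat q else x < of_rat q)"

definition sec_set :: "pam_section \<Rightarrow> real set" where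
  "sec_set s = {x. above_lo (fst s) x \<and> below_hi (fst (snd s)) x}"

definition pam_valid :: "pam_section list \<Rightarrow> bool" where
  "pam_valid secs \<longleftrightarrow>
     (\<forall>i<length secs. \<forall>j<length secs. i \<noteq> j \<longrightarrow> sec_set (secs!i) \<inter> sec_set (secs!j) = {}) \<and>
     (\<Union>s\<in>set secs. sec_set s) = UNIV \<and>
     (\<forall>s\<in>set secs. fst (snd (snd s)) \<noteq> 0)"

definition pam_apply :: "pam_section list \<Rightarrow> real \<Rightarrow> real" where
  "pam_apply secs x =
     (case find (\<lambda>s. x \<in> sec_set s) secs of
        None \<Rightarrow> x
      | Some s \<Rightarrow> of_rat (fst (snd (snd s))) * x + of_rat (snd (snd (snd s))))"

fun bound_code :: "bound \<Rightarrow> nat" where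
  "bound_code None = 0"
| "bound_code (Some (q, c)) = Suc (prod_encode (rat_code q, if c then 1 else 0))"

definition sec_code :: "pam_section \<Rightarrow> nat" where
  "sec_code s = (case s of (lo, hi, a, b) \<Rightarrow>
      list_encode [bound_code lo, bound_code hi, rat_code a, rat_code b])"

definition reach_code :: "pam_section list \<Rightarrow> rat \<Rightarrow> rat \<Rightarrow> nat" where
  "reach_code secs s t = prod_encode (list_encode (map sec_code secs), prod_encode (rat_code s, rat_code t))"

definition PAM_REACH :: "nat set" where
  "PAM_REACH = {reach_code secs s t | secs s t. pam_valid secs \<and>
      (\<exists>n. (pam_apply secs ^^ n) (of_rat s) = of_rat t)}"

end

theory Submission
  imports Defs
begin

(* Write w(i) = a + (b - a) e(i). For a \<noteq> b the instance (l, t, a, b) has a solution iff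
   S = (t - a / (1 - l)) / (b - a) is a digit sum \<Sum> e(i) l^i with e(i) \<in> {0, 1}, i.e. lies
   in the l-Cantor set C, and x \<in> C iff the orbit of x under the greedy shift
   x \<mapsto> (x - [x \<ge> 1]) / l never leaves I = [0, 1 / (1 - l)]. A piecewise affine escape map
   agrees with the shift on I and sends every N-adic point that leaves I to an integer target
   M > 1 / (1 - l): above M it subtracts 1, and on [M, M + 1) it stretches the distance to M by the
   factor N, each stretch removing one factor N from the denominator. So S \<notin> C iff M is
   reachable from S, where N is chosen to keep S and its orbit N-adic. For a = b the instance is
   solvable iff t = a / (1 - l). Decoding a TDS instance and building the escape map from it uses
   only rational arithmetic on codes, which partial recursive functions can carry out, so a
   decider for PAM_REACH yields one for TDS. *)

section \<open>Computable functions\<close>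

definition computable :: "nat \<Rightarrow> (nat list \<Rightarrow> nat) \<Rightarrow> bool" where
  "computable k F \<longleftrightarrow> (\<exists>f. \<forall>xs. length xs = k \<longrightarrow> rec_eval f xs (F xs))"

definition computable_pred :: "nat \<Rightarrow> (nat list \<Rightarrow> bool) \<Rightarrow> bool" where
  "computable_pred k P \<longleftrightarrow> computable k (\<lambda>xs. of_bool (P xs))"

lemma decidable_iff_computable_pred: "decidable A \<longleftrightarrow> computable_pred 1 (\<lambda>xs. hd xs \<in> A)"
proof
  assume "decidable A"
  then obtain f where f: "\<forall>n. rec_eval f [n] (of_bool (n \<in> A))"
    unfolding decidable_def of_bool_def by auto
  show "computable_pred 1 (\<lambda>xs. hd xs \<in> A)"
    unfolding computable_pred_def computable_def
  proof (intro exI allI impI)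
    fix xs :: "nat list"
    assume "length xs = 1"
    then obtain n where "xs = [n]" by (auto simp: length_Suc_conv)
    then show "rec_eval f xs (of_bool (hd xs \<in> A))" using f by simp
  qed
next
  assume "computable_pred 1 (\<lambda>xs. hd xs \<in> A)"
  then obtain f where f: "\<forall>xs. length xs = 1 \<longrightarrow> rec_eval f xs (of_bool (hd xs \<in> A))"
    unfolding computable_pred_def computable_def by auto
  have "rec_eval f [n] (if n \<in> A then 1 else 0)" for n
    using f[rule_format, of "[n]"] unfolding of_bool_def by simp
  then show "decidable A" unfolding decidable_def by blast
qed

lemma computable_cong:
  "computable k F \<Longrightarrow> (\<And>xs. length xs = k \<Longrightarrow> F xs = G xs) \<Longrightarrow> computable k G"
  unfolding computable_def by metis

lemma computable_pred_cong:
  "computable_pred k P \<Longrightarrow> (\<And>xs. length xs = k \<Longrightarrow> P xs \<longleftrightarrow> Q xs) \<Longrightarrow> computable_pred k Q"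
  unfolding computable_pred_def by (erule computable_cong) simp

lemma computable_comp:
  assumes "computable m H" "length Fs = m" "\<forall>F\<in>set Fs. computable k F"
  shows "computable k (\<lambda>xs. H (map (\<lambda>F. F xs) Fs))"
proof -
  obtain h where h: "\<forall>xs. length xs = m \<longrightarrow> rec_eval h xs (H xs)"
    using assms(1) computable_def by auto
  obtain f where f: "\<forall>F\<in>set Fs. \<forall>xs. length xs = k \<longrightarrow> rec_eval (f F) xs (F xs)"
    using assms(3) unfolding computable_def by metis
  have "rec_eval (Cn h (map f Fs)) xs (H (map (\<lambda>F. F xs) Fs))" if "length xs = k" for xs
  proof (rule rec_eval.comp)
    show "list_all2 (\<lambda>g y. rec_eval g xs y) (map f Fs) (map (\<lambda>F. F xs) Fs)"
      using f that by (auto simp: list_all2_conv_all_nth)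
  qed (use h assms(2) in auto)
  then show ?thesis unfolding computable_def by blast
qed

lemma computable_proj: "i < k \<Longrightarrow> computable k (\<lambda>xs. xs ! i)"
  unfolding computable_def by (auto intro: rec_eval.proj)

lemma computable_reindex:
  assumes "computable k F" "\<forall>j<k. \<sigma> j < m"
  shows "computable m (\<lambda>ys. F (map (\<lambda>j. ys ! \<sigma> j) [0..<k]))"
proof -
  have "computable m (\<lambda>ys. F (map (\<lambda>G. G ys) (map (\<lambda>j ys. ys ! \<sigma> j) [0..<k])))"
  proof (rule computable_comp[OF assms(1)])
    show "\<forall>G\<in>set (map (\<lambda>j ys. ys ! \<sigma> j) [0..<k]). computable m G"
      using assms(2) by (auto intro: computable_proj)
  qed simp
  then show ?thesis by (simp add: comp_def)
qed

fun prim_rec :: "(nat list \<Rightarrow> nat) \<Rightarrow> (nat list \<Rightarrow> nat) \<Rightarrow> nat \<Rightarrow> nat list \<Rightarrow> nat" where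
  "prim_rec F G 0 ys = F ys"
| "prim_rec F G (Suc n) ys = G (n # prim_rec F G n ys # ys)"

lemma computable_prim_rec:
  assumes "computable k F" "computable (Suc (Suc k)) G"
  shows "computable (Suc k) (\<lambda>xs. prim_rec F G (hd xs) (tl xs))"
proof -
  obtain f where f: "\<forall>xs. length xs = k \<longrightarrow> rec_eval f xs (F xs)"
    using assms(1) computable_def by auto
  obtain g where g: "\<forall>xs. length xs = Suc (Suc k) \<longrightarrow> rec_eval g xs (G xs)"
    using assms(2) computable_def by auto
  have *: "rec_eval (Pr f g) (n # ys) (prim_rec F G n ys)" if "length ys = k" for n ys
    by (induction n) (use f g that in \<open>auto intro: rec_eval.prim0 rec_eval.primS\<close>)
  have "rec_eval (Pr f g) xs (prim_rec F G (hd xs) (tl xs))" if "length xs = Suc k" for xs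
    using *[of "tl xs" "hd xs"] that by (cases xs) auto
  then show ?thesis unfolding computable_def by blast
qed

lemma computable_Suc:
  assumes "computable k F"
  shows "computable k (\<lambda>xs. Suc (F xs))"
proof -
  have "computable 1 (\<lambda>xs. Suc (hd xs))"
    unfolding computable_def
    by (rule exI[of _ Sf]) (auto simp: length_Suc_conv intro: rec_eval.succ)
  from computable_comp[OF this, of "[F]"] assms show ?thesis by simp
qed

lemma computable_const: "computable k (\<lambda>_. c)"
proof (induction c)
  case 0
  show ?case unfolding computable_def by (auto intro: rec_eval.zero)
qed (rule computable_Suc)

lemma computable_hd: "0 < k \<Longrightarrow> computable k hd"
  by (rule computable_cong[OF computable_proj[of 0 k]]) (auto simp: hd_conv_nth)

lemma computable_comp2:
  "computable 2 H \<Longrightarrow> computable k F \<Longrightarrow> computable k G \<Longrightarrow> computable k (\<lambda>xs. H [F xs, G xs])"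
  using computable_comp[of 2 H "[F, G]" k] by simp

lemma computable_binop:
  assumes "computable 2 (\<lambda>xs. f (xs ! 0) (xs ! 1))" "computable k F" "computable k G"
  shows "computable k (\<lambda>xs. f (F xs) (G xs))"
  using computable_comp2[OF assms] by simp

lemma computable_prim_rec2:
  assumes "computable 1 F" "computable 3 G" "\<And>n y. prim_rec F G n [y] = h n y"
  shows "computable 2 (\<lambda>xs. h (xs ! 0) (xs ! 1))"
proof -
  have "computable 2 (\<lambda>xs. prim_rec F G (hd xs) (tl xs))"
    using computable_prim_rec[of 1 F G] assms(1,2) by (simp add: numeral_3_eq_3 numeral_2_eq_2)
  then show ?thesis
    by (rule computable_cong) (auto simp: length_Suc_conv numeral_2_eq_2 assms(3))
qed

lemma computable_add: "computable k F \<Longrightarrow> computable k G \<Longrightarrow> computable k (\<lambda>xs. F xs + G xs)"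
proof (rule computable_binop[where f = "(+)"])
  have "prim_rec hd (\<lambda>zs. Suc (zs ! 1)) n [y] = n + y" for n y by (induction n) auto
  then show "computable 2 (\<lambda>xs. xs ! 0 + xs ! 1)"
    by (intro computable_prim_rec2[where h = "(+)" and F = hd and G = "\<lambda>zs. Suc (zs ! 1)"]
        computable_hd computable_Suc computable_proj) auto
qed

lemma computable_mult: "computable k F \<Longrightarrow> computable k G \<Longrightarrow> computable k (\<lambda>xs. F xs * G xs)"
proof (rule computable_binop[where f = "(*)"])
  have "prim_rec (\<lambda>_. 0) (\<lambda>zs. zs ! 1 + zs ! 2) n [y] = n * y" for n y by (induction n) auto
  then show "computable 2 (\<lambda>xs. xs ! 0 * xs ! 1)"
    by (intro computable_prim_rec2[where h = "(*)" and F = "\<lambda>_. 0" and G = "\<lambda>zs. zs ! 1 + zs ! 2"]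
        computable_const computable_add computable_proj) auto
qed

lemma computable_decrement:
  assumes "computable k F"
  shows "computable k (\<lambda>xs. F xs - 1)"
proof -
  have "prim_rec (\<lambda>_. 0) hd n ys = n - 1" for n ys by (induction n) auto
  moreover have "computable 1 (\<lambda>xs. prim_rec (\<lambda>_. 0) hd (hd xs) (tl xs))"
    using computable_prim_rec[of 0 "\<lambda>_. 0" hd] computable_const computable_hd[of "Suc (Suc 0)"]
    by simp
  ultimately have "computable 1 (\<lambda>xs. hd xs - 1)" by simp
  from computable_comp[OF this, of "[F]"] assms show ?thesis by simp
qed

lemma computable_diff:
  assumes "computable k F" "computable k G"
  shows "computable k (\<lambda>xs. F xs - G xs)"
proof -
  have "prim_rec hd (\<lambda>zs. zs ! 1 - 1) n [y] = y - n" for n y by (induction n) auto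
  then have "computable 2 (\<lambda>xs. xs ! 1 - xs ! 0)"
    by (intro computable_prim_rec2[where h = "\<lambda>n y. y - n" and F = hd and G = "\<lambda>zs. zs ! 1 - 1"]
        computable_hd computable_decrement computable_proj) auto
  from computable_comp2[OF this assms(2,1)] show ?thesis by simp
qed

lemma computable_unop:
  "computable 1 (\<lambda>xs. f (hd xs)) \<Longrightarrow> computable k F \<Longrightarrow> computable k (\<lambda>xs. f (F xs))"
  using computable_comp[of 1 "\<lambda>xs. f (hd xs)" "[F]"] by simp

lemma computable_pred_unop:
  "computable_pred 1 (\<lambda>xs. p (hd xs)) \<Longrightarrow> computable k F \<Longrightarrow> computable_pred k (\<lambda>xs. p (F xs))"
  unfolding computable_pred_def by (rule computable_unop[where f = "\<lambda>x. of_bool (p x)"])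

lemma computable_pred_binop:
  "computable_pred 2 (\<lambda>xs. p (xs ! 0) (xs ! 1)) \<Longrightarrow> computable k F \<Longrightarrow> computable k G \<Longrightarrow>
    computable_pred k (\<lambda>xs. p (F xs) (G xs))"
  unfolding computable_pred_def by (rule computable_binop[where f = "\<lambda>x y. of_bool (p x y)"])

lemma computable_If:
  assumes "computable_pred k P" "computable k F" "computable k G"
  shows "computable k (\<lambda>xs. if P xs then F xs else G xs)"
proof -
  have "computable k (\<lambda>xs. F xs * of_bool (P xs) + G xs * (1 - of_bool (P xs)))"
    using assms unfolding computable_pred_def
    by (intro computable_add computable_mult computable_diff computable_const)
  then show ?thesis by (rule computable_cong) simp
qed

lemma computable_pred_eq:
  assumes "computable k F" "computable k G"
  shows "computable_pred k (\<lambda>xs. F xs = G xs)"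
proof -
  have "computable k (\<lambda>xs. 1 - ((F xs - G xs) + (G xs - F xs)))"
    by (intro computable_diff computable_add computable_const assms)
  then show ?thesis unfolding computable_pred_def by (rule computable_cong) auto
qed

lemma computable_pred_le:
  assumes "computable k F" "computable k G"
  shows "computable_pred k (\<lambda>xs. F xs \<le> G xs)"
proof -
  have "computable k (\<lambda>xs. 1 - (F xs - G xs))"
    by (intro computable_diff computable_const assms)
  then show ?thesis unfolding computable_pred_def by (rule computable_cong) auto
qed

lemma computable_pred_less:
  assumes "computable k F" "computable k G"
  shows "computable_pred k (\<lambda>xs. F xs < G xs)"
proof -
  have "computable k (\<lambda>xs. 1 - (Suc (F xs) - G xs))"
    by (intro computable_diff computable_Suc computable_const assms)
  then show ?thesis unfolding computable_pred_def by (rule computable_cong) auto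
qed

lemma computable_pred_conj:
  assumes "computable_pred k P" "computable_pred k Q"
  shows "computable_pred k (\<lambda>xs. P xs \<and> Q xs)"
proof -
  have "computable k (\<lambda>xs. of_bool (P xs) * of_bool (Q xs))"
    by (intro computable_mult assms[unfolded computable_pred_def])
  then show ?thesis unfolding computable_pred_def by (rule computable_cong) auto
qed

lemma computable_pred_not:
  assumes "computable_pred k P"
  shows "computable_pred k (\<lambda>xs. \<not> P xs)"
proof -
  have "computable k (\<lambda>xs. 1 - of_bool (P xs))"
    by (intro computable_diff computable_const assms[unfolded computable_pred_def])
  then show ?thesis unfolding computable_pred_def by (rule computable_cong) auto
qed

lemma computable_pred_disj:
  "computable_pred k P \<Longrightarrow> computable_pred k Q \<Longrightarrow> computable_pred k (\<lambda>xs. P xs \<or> Q xs)"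
  using computable_pred_not[OF computable_pred_conj[OF computable_pred_not computable_pred_not]]
  by simp

lemma computable_pred_imp:
  "computable_pred k P \<Longrightarrow> computable_pred k Q \<Longrightarrow> computable_pred k (\<lambda>xs. P xs \<longrightarrow> Q xs)"
  using computable_pred_disj[OF computable_pred_not] by simp

lemma computable_shift:
  assumes "computable k F"
  shows "computable (Suc k) (\<lambda>ys. F (tl ys))"
proof -
  have "map (\<lambda>j. ys ! Suc j) [0..<k] = tl ys" if "length ys = Suc k" for ys :: "nat list"
    using that by (auto intro!: nth_equalityI simp: nth_tl)
  then show ?thesis
    using computable_reindex[OF assms, of Suc "Suc k"] by (simp add: computable_cong)
qed

lemma computable_Cons_arg:
  assumes "computable (Suc k) H" "computable k B"
  shows "computable k (\<lambda>xs. H (B xs # xs))"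
proof -
  have "computable k (\<lambda>xs. H (map (\<lambda>F. F xs) (B # map (\<lambda>j xs. xs ! j) [0..<k])))"
    using assms by (intro computable_comp) (auto intro: computable_proj)
  then show ?thesis by (rule computable_cong) (simp add: comp_def, metis map_nth)
qed

lemma computable_sum:
  assumes "computable k B" "computable (Suc k) (\<lambda>ys. f (hd ys) (tl ys))"
  shows "computable k (\<lambda>xs. \<Sum>i<B xs. f i xs)"
proof -
  let ?\<sigma> = "\<lambda>j. if j = 0 then 0 else Suc j"
  have map_eq: "map (\<lambda>j. zs ! ?\<sigma> j) [0..<Suc k] = hd zs # tl (tl zs)"
    if "length zs = Suc (Suc k)" for zs
    using that by (cases zs) (auto intro!: nth_equalityI simp del: upt_Suc simp: nth_Cons' nth_tl)
  have "computable (Suc (Suc k)) (\<lambda>zs. f (hd (map (\<lambda>j. zs ! ?\<sigma> j) [0..<Suc k]))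
      (tl (map (\<lambda>j. zs ! ?\<sigma> j) [0..<Suc k])))"
    by (rule computable_reindex[OF assms(2)]) auto
  then have "computable (Suc (Suc k)) (\<lambda>zs. f (hd zs) (tl (tl zs)))"
    by (rule computable_cong) (simp del: upt_Suc add: map_eq)
  then have "computable (Suc k)
      (\<lambda>ys. prim_rec (\<lambda>_. 0) (\<lambda>zs. zs ! 1 + f (hd zs) (tl (tl zs))) (hd ys) (tl ys))"
    by (intro computable_prim_rec computable_add computable_proj computable_const) auto
  moreover have "prim_rec (\<lambda>_. 0) (\<lambda>zs. zs ! 1 + f (hd zs) (tl (tl zs))) n ys = (\<Sum>i<n. f i ys)"
    for n ys by (induction n) auto
  ultimately have "computable (Suc k) (\<lambda>ys. \<Sum>i<hd ys. f i (tl ys))" by simp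
  from computable_Cons_arg[OF this assms(1)] show ?thesis by simp
qed

lemma computable_pred_bex:
  assumes "computable k B" "computable_pred (Suc k) (\<lambda>ys. P (hd ys) (tl ys))"
  shows "computable_pred k (\<lambda>xs. \<exists>i<B xs. P i xs)"
proof -
  have "computable_pred k (\<lambda>xs. 0 < (\<Sum>i<B xs. of_bool (P i xs) :: nat))"
    using assms unfolding computable_pred_def
    by (intro computable_pred_less[unfolded computable_pred_def] computable_sum computable_const)
  moreover have "0 < (\<Sum>i<n. of_bool (Q i) :: nat) \<longleftrightarrow> (\<exists>i<n. Q i)" for n :: nat and Q
    by (induction n) (auto simp: less_Suc_eq)
  ultimately show ?thesis by simp
qed

lemma computable_pred_ball:
  assumes "computable k B" "computable_pred (Suc k) (\<lambda>ys. P (hd ys) (tl ys))"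
  shows "computable_pred k (\<lambda>xs. \<forall>i<B xs. P i xs)"
  using computable_pred_not[OF computable_pred_bex[OF assms(1) computable_pred_not[OF assms(2)]]]
  by simp

lemma sum_if_unique:
  assumes "\<And>i. i < n \<and> P i \<longleftrightarrow> i = m"
  shows "(\<Sum>i<n. if P i then i else 0) = (m :: nat)"
proof -
  have "(\<Sum>i<n. if P i then i else 0) = (\<Sum>i<n. if i = m then m else 0)"
    using assms by (intro sum.cong) auto
  also have "\<dots> = m" using assms[of m] by (simp add: sum.delta)
  finally show ?thesis .
qed

lemma computable_search:
  assumes "computable k B" "computable_pred (Suc k) (\<lambda>ys. P (hd ys) (tl ys))"
    and "\<And>xs i. length xs = k \<Longrightarrow> i < B xs \<and> P i xs \<longleftrightarrow> i = F xs"
  shows "computable k F"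
proof -
  have "computable k (\<lambda>xs. \<Sum>i<B xs. if P i xs then i else 0)"
    using assms(1,2) by (intro computable_sum computable_If computable_hd computable_const) auto
  then show ?thesis
  proof (rule computable_cong)
    fix xs :: "nat list"
    assume "length xs = k"
    then show "(\<Sum>i<B xs. if P i xs then i else 0) = F xs"
      by (intro sum_if_unique assms(3))
  qed
qed

(* computable_shift covers arguments accessed through tl: higher-order unification finds F. *)
lemmas computable_intros =
  computable_const computable_proj computable_hd computable_shift computable_Suc computable_add
  computable_mult computable_diff computable_If
  computable_pred_eq computable_pred_le computable_pred_less computable_pred_conj
  computable_pred_disj computable_pred_not computable_pred_imp computable_pred_bex
  computable_pred_ball

lemma div_nat_unique:
  "i < Suc m \<and> (i * d \<le> m \<and> m < Suc i * d \<or> d = 0 \<and> i = 0) \<longleftrightarrow> i = m div (d :: nat)"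
proof (cases "d = 0")
  case False
  then have "i * d \<le> m \<and> m < Suc i * d \<longleftrightarrow> i = m div d"
    using div_nat_eqI[of d i m] dividend_less_div_times[of d m] by (auto simp: mult.commute)
  moreover have "m div d < Suc m" by (simp add: le_imp_less_Suc)
  ultimately show ?thesis using False by auto
qed auto

lemma computable_div:
  assumes "computable k F" "computable k G"
  shows "computable k (\<lambda>xs. F xs div G xs)"
proof -
  have "computable 2 (\<lambda>xs. xs ! 0 div xs ! 1)"
  proof (rule computable_search[where B = "\<lambda>xs. Suc (xs ! 0)"
        and P = "\<lambda>i xs. i * xs ! 1 \<le> xs ! 0 \<and> xs ! 0 < Suc i * xs ! 1 \<or> xs ! 1 = 0 \<and> i = 0"])
    show "i < Suc (xs ! 0) \<and> (i * xs ! 1 \<le> xs ! 0 \<and> xs ! 0 < Suc i * xs ! 1 \<or> xs ! 1 = 0 \<and> i = 0)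
        \<longleftrightarrow> i = xs ! 0 div xs ! 1" for xs i
      by (rule div_nat_unique)
  qed (intro computable_intros; simp)+
  from computable_binop[where f = "(div)", OF this assms] show ?thesis .
qed

lemma computable_prod_encode:
  assumes "computable k F" "computable k G"
  shows "computable k (\<lambda>xs. prod_encode (F xs, G xs))"
  unfolding prod_encode_def triangle_def
  by (simp, intro computable_intros computable_div assms)

lemma computable_prod_decode:
  assumes "computable k F"
  shows "computable k (\<lambda>xs. fst (prod_decode (F xs)))"
    and "computable k (\<lambda>xs. snd (prod_decode (F xs)))"
proof -
  have fst: "i < Suc c \<and> (\<exists>j<Suc c. prod_encode (i, j) = c) \<longleftrightarrow> i = fst (prod_decode c)"
    and snd: "i < Suc c \<and> (\<exists>j<Suc c. prod_encode (j, i) = c) \<longleftrightarrow> i = snd (prod_decode c)" for i c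
    by (metis le_imp_less_Suc le_prod_encode_1 le_prod_encode_2 prod_decode_inverse
        prod_encode_inverse prod.collapse fst_conv snd_conv)+
  have "computable 1 (\<lambda>xs. fst (prod_decode (hd xs)))"
  proof (rule computable_search[where B = "\<lambda>xs. Suc (hd xs)"
        and P = "\<lambda>i xs. \<exists>j<Suc (hd xs). prod_encode (i, j) = hd xs"])
    show "computable_pred (Suc 1) (\<lambda>ys. \<exists>j<Suc (hd (tl ys)). prod_encode (hd ys, j) = hd (tl ys))"
      by (intro computable_intros computable_prod_encode) simp_all
  qed (use fst in \<open>auto intro: computable_intros\<close>)
  moreover have "computable 1 (\<lambda>xs. snd (prod_decode (hd xs)))"
  proof (rule computable_search[where B = "\<lambda>xs. Suc (hd xs)"
        and P = "\<lambda>i xs. \<exists>j<Suc (hd xs). prod_encode (j, i) = hd xs"])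
    show "computable_pred (Suc 1) (\<lambda>ys. \<exists>j<Suc (hd (tl ys)). prod_encode (j, hd ys) = hd (tl ys))"
      by (intro computable_intros computable_prod_encode) simp_all
  qed (use snd in \<open>auto intro: computable_intros\<close>)
  ultimately show "computable k (\<lambda>xs. fst (prod_decode (F xs)))"
    and "computable k (\<lambda>xs. snd (prod_decode (F xs)))"
    using assms by (auto intro: computable_unop[where f = "\<lambda>c. fst (prod_decode c)"]
        computable_unop[where f = "\<lambda>c. snd (prod_decode c)"])
qed

definition list_code_nth :: "nat \<Rightarrow> nat \<Rightarrow> nat" where
  "list_code_nth n i = fst (prod_decode (((\<lambda>m. snd (prod_decode (m - 1))) ^^ i) n - 1))"

lemma list_code_nth_list_encode: "i < length xs \<Longrightarrow> list_code_nth (list_encode xs) i = xs ! i"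
proof (induction xs arbitrary: i)
  case (Cons x xs)
  have "list_code_nth n (Suc j) = list_code_nth (snd (prod_decode (n - 1))) j" for n j
    by (simp add: list_code_nth_def funpow_Suc_right del: funpow.simps)
  with Cons show ?case by (cases i) (simp_all add: list_code_nth_def)
qed simp

lemma computable_list_code_nth:
  assumes "computable k F"
  shows "computable k (\<lambda>xs. list_code_nth (F xs) i)"
proof -
  have "computable k (\<lambda>xs. ((\<lambda>m. snd (prod_decode (m - 1))) ^^ i) (F xs))"
    by (induction i) (simp_all add: assms computable_prod_decode computable_diff computable_const)
  then show ?thesis
    unfolding list_code_nth_def by (intro computable_prod_decode computable_diff computable_const)
qed

section \<open>Computable integer and rational arithmetic\<close>

definition computable_int :: "nat \<Rightarrow> (nat list \<Rightarrow> int) \<Rightarrow> bool" where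
  "computable_int k I \<longleftrightarrow> computable k (\<lambda>xs. int_encode (I xs))"

lemma computable_int_cong:
  "computable_int k I \<Longrightarrow> (\<And>xs. length xs = k \<Longrightarrow> I xs = J xs) \<Longrightarrow> computable_int k J"
  unfolding computable_int_def by (erule computable_cong) simp

lemma int_encode_nat_parts: "int_encode x = (if 0 \<le> x then 2 * nat x else 2 * nat (- x) - 1)"
  by (simp add: int_encode_def sum_encode_def nat_diff_distrib') linarith

lemma computable_int_iff:
  "computable_int k I \<longleftrightarrow> computable k (\<lambda>xs. nat (I xs)) \<and> computable k (\<lambda>xs. nat (- I xs))"
proof
  assume "computable_int k I"
  then have c: "computable k (\<lambda>xs. int_encode (I xs))" by (simp add: computable_int_def)
  have "nat x = (if 2 * (int_encode x div 2) = int_encode x then int_encode x div 2 else 0)"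
    and "nat (- x) =
      (if 2 * (int_encode x div 2) = int_encode x then 0 else Suc (int_encode x) div 2)"
    for x :: int
    by (auto simp: int_encode_nat_parts)
  then show "computable k (\<lambda>xs. nat (I xs)) \<and> computable k (\<lambda>xs. nat (- I xs))"
    by (simp only:) (intro conjI computable_intros computable_div c)
next
  assume "computable k (\<lambda>xs. nat (I xs)) \<and> computable k (\<lambda>xs. nat (- I xs))"
  moreover have "int_encode x = (if nat (- x) = 0 then 2 * nat x else 2 * nat (- x) - 1)" for x
    by (simp add: int_encode_nat_parts)
  ultimately show "computable_int k I"
    unfolding computable_int_def by (simp only:) (intro computable_intros; simp)
qed

lemma computable_nat: "computable_int k I \<Longrightarrow> computable k (\<lambda>xs. nat (I xs))"
  by (simp add: computable_int_iff)

lemma computable_int_of_nat_diff: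
  assumes "computable k A" "computable k B"
  shows "computable_int k (\<lambda>xs. int (A xs) - int (B xs))"
  using computable_diff[OF assms] computable_diff[OF assms(2,1)]
  by (simp add: computable_int_iff nat_minus_as_int)

lemma computable_int_const: "computable_int k (\<lambda>_. c)"
  unfolding computable_int_def by (rule computable_const)

lemma computable_int_decode: "computable k F \<Longrightarrow> computable_int k (\<lambda>xs. int_decode (F xs))"
  unfolding computable_int_def by simp

lemma computable_int_shift: "computable_int k I \<Longrightarrow> computable_int (Suc k) (\<lambda>ys. I (tl ys))"
  unfolding computable_int_def by (rule computable_shift)

lemma computable_int_minus:
  assumes "computable_int k I"
  shows "computable_int k (\<lambda>xs. - I xs)"
  using assms by (simp add: computable_int_iff)

lemma computable_int_add:
  assumes "computable_int k I" "computable_int k J"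
  shows "computable_int k (\<lambda>xs. I xs + J xs)"
proof -
  have "computable_int k (\<lambda>xs. int (nat (I xs) + nat (J xs)) - int (nat (- I xs) + nat (- J xs)))"
    using assms by (intro computable_int_of_nat_diff computable_add computable_nat
        computable_int_minus)
  then show ?thesis by (rule computable_int_cong) simp
qed

lemma computable_int_mult:
  assumes "computable_int k I" "computable_int k J"
  shows "computable_int k (\<lambda>xs. I xs * J xs)"
proof -
  have "computable_int k (\<lambda>xs. int (nat (I xs) * nat (J xs) + nat (- I xs) * nat (- J xs))
      - int (nat (I xs) * nat (- J xs) + nat (- I xs) * nat (J xs)))"
    using assms by (intro computable_int_of_nat_diff computable_add computable_mult computable_nat
        computable_int_minus)
  moreover have "int (nat x * nat y + nat (- x) * nat (- y)) -
      int (nat x * nat (- y) + nat (- x) * nat y) = x * y" for x y :: int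
    by (cases "0 \<le> x"; cases "0 \<le> y") (simp_all add: algebra_simps)
  ultimately show ?thesis by simp
qed

lemma computable_int_diff:
  "computable_int k I \<Longrightarrow> computable_int k J \<Longrightarrow> computable_int k (\<lambda>xs. I xs - J xs)"
  using computable_int_add[OF _ computable_int_minus, of k I J] by simp

lemma computable_pred_int_eq:
  "computable_int k I \<Longrightarrow> computable_int k J \<Longrightarrow> computable_pred k (\<lambda>xs. I xs = J xs)"
  unfolding computable_int_def by (drule (1) computable_pred_eq) (simp add: int_encode_eq)

lemma computable_pred_int_less:
  assumes "computable_int k I" "computable_int k J"
  shows "computable_pred k (\<lambda>xs. I xs < J xs)"
proof -
  have "computable_pred k (\<lambda>xs. 0 < nat (J xs - I xs))"
    using assms by (intro computable_pred_less computable_const computable_nat computable_int_diff)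
  then show ?thesis by (rule computable_pred_cong) simp
qed

lemma computable_int_abs:
  assumes "computable_int k I"
  shows "computable_int k (\<lambda>xs. \<bar>I xs\<bar>)"
proof -
  have "nat \<bar>x\<bar> = nat x + nat (- x)" "nat (- \<bar>x\<bar>) = 0" for x :: int by auto
  then show ?thesis using assms by (simp add: computable_int_iff computable_add computable_const)
qed

lemma computable_pred_dvd:
  assumes "computable k F" "computable k G"
  shows "computable_pred k (\<lambda>xs. F xs dvd G xs)"
proof -
  have "computable_pred k (\<lambda>xs. F xs * (G xs div F xs) = G xs)"
    using assms by (intro computable_pred_eq computable_mult computable_div)
  moreover have "d * (m div d) = m \<longleftrightarrow> d dvd m" for d m :: nat
  proof
    assume "d * (m div d) = m"
    then show "d dvd m" by (rule dvdI[OF sym])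
  qed simp
  ultimately show ?thesis by simp
qed

lemma coprime_iff_bounded_divisors:
  "coprime m n \<longleftrightarrow> (\<forall>d<Suc (m + n). d dvd m \<and> d dvd n \<longrightarrow> d = 1)" for m n :: nat
proof
  assume H: "\<forall>d<Suc (m + n). d dvd m \<and> d dvd n \<longrightarrow> d = 1"
  have "gcd m n \<le> m + n"
    by (cases "m = 0") (simp_all add: trans_le_add1)
  then have "gcd m n = 1" using H[rule_format, of "gcd m n"] by simp
  then show "coprime m n" by (simp add: coprime_iff_gcd_eq_1)
next
  assume "coprime m n"
  show "\<forall>d<Suc (m + n). d dvd m \<and> d dvd n \<longrightarrow> d = 1"
    using coprime_common_divisor_nat[OF \<open>coprime m n\<close>] by blast
qed

lemma computable_pred_coprime:
  assumes "computable k F" "computable k G"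
  shows "computable_pred k (\<lambda>xs. coprime (F xs) (G xs))"
proof -
  have "computable_pred 2 (\<lambda>xs. \<forall>d<Suc (xs ! 0 + xs ! 1). d dvd xs ! 0 \<and> d dvd xs ! 1 \<longrightarrow> d = 1)"
    by (intro computable_intros computable_pred_dvd) simp_all
  then have "computable_pred 2 (\<lambda>xs. coprime (xs ! 0) (xs ! 1))"
    by (simp add: coprime_iff_bounded_divisors)
  from computable_pred_binop[OF this assms] show ?thesis .
qed

definition computable_rat :: "nat \<Rightarrow> (nat list \<Rightarrow> rat) \<Rightarrow> bool" where
  "computable_rat k R \<longleftrightarrow> computable k (\<lambda>xs. rat_code (R xs))"

lemma computable_rat_cong:
  "computable_rat k R \<Longrightarrow> (\<And>xs. length xs = k \<Longrightarrow> R xs = S xs) \<Longrightarrow> computable_rat k S"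
  unfolding computable_rat_def by (erule computable_cong) simp

lemma computable_rat_code: "computable_rat k R \<Longrightarrow> computable k (\<lambda>xs. rat_code (R xs))"
  by (simp add: computable_rat_def)

lemma quotient_of_eq_iff: "quotient_of r = (p, q) \<longleftrightarrow> r = of_int p / of_int q \<and> 0 < q \<and> coprime p q"
proof
  assume "r = of_int p / of_int q \<and> 0 < q \<and> coprime p q"
  then have "r = Fract (fst (p, q)) (snd (p, q)) \<and> 0 < snd (p, q) \<and>
      coprime (fst (p, q)) (snd (p, q))"
    by (simp add: Fract_of_int_quotient)
  from the1_equality[OF quotient_of_unique this] show "quotient_of r = (p, q)"
    by (simp add: quotient_of_def)
qed (use quotient_of_div quotient_of_denom_pos quotient_of_coprime in blast)

lemma rat_code_eq_iff:
  "rat_code r = c \<longleftrightarrow>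
    quotient_of r = (int_decode (fst (prod_decode c)), int_decode (snd (prod_decode c)))"
  unfolding rat_code_def
  by (metis int_decode_inverse int_encode_inverse prod.collapse prod_decode_inverse
      prod_encode_inverse
      fst_conv snd_conv)

lemma prod_encode_mono: "a \<le> a' \<Longrightarrow> b \<le> b' \<Longrightarrow> prod_encode (a, b) \<le> prod_encode (a', b')"
  unfolding prod_encode_def triangle_def by (simp add: add_mono div_le_mono mult_le_mono)

lemma rat_code_quotient_bound:
  assumes "q \<noteq> 0"
  shows "rat_code (of_int p / of_int q) < Suc (prod_encode (2 * nat \<bar>p\<bar>, 2 * nat \<bar>q\<bar>))"
proof -
  obtain P Q where PQ: "quotient_of (of_int p / of_int q) = (P, Q)" by fastforce
  then have Q: "0 < Q" "coprime P Q" and eq: "of_int P / of_int Q = (of_int p / of_int q :: rat)"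
    by (auto simp: quotient_of_eq_iff)
  then have cross: "P * q = p * Q"
    using assms by (simp add: frac_eq_eq flip: of_int_mult of_int_eq_iff)
  then have "Q dvd P * q" by simp
  then have "Q dvd q" using Q(2) by (simp add: coprime_commute coprime_dvd_mult_right_iff)
  then have Qq: "Q \<le> \<bar>q\<bar>" using assms by (simp add: zdvd_imp_le)
  have "\<bar>P\<bar> * Q \<le> \<bar>p\<bar> * Q"
    using cross Q(1) Qq by (metis abs_mult abs_of_pos mult_left_mono abs_ge_zero)
  then have Pp: "\<bar>P\<bar> \<le> \<bar>p\<bar>" using Q(1) by simp
  have "int_encode P \<le> 2 * nat \<bar>p\<bar>" "int_encode Q \<le> 2 * nat \<bar>q\<bar>"
    using Pp Qq Q(1) by (auto simp: int_encode_nat_parts)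
  then show ?thesis
    unfolding rat_code_def PQ by (simp add: le_imp_less_Suc prod_encode_mono)
qed

lemma computable_rat_quotient_nonzero:
  assumes P: "computable_int k P" and Q: "computable_int k Q"
    and nonzero: "\<And>xs. length xs = k \<Longrightarrow> Q xs \<noteq> 0"
  shows "computable_rat k (\<lambda>xs. of_int (P xs) / of_int (Q xs))"
  unfolding computable_rat_def
proof -
  let ?num = "\<lambda>c. int_decode (fst (prod_decode c))"
    and ?den = "\<lambda>c. int_decode (snd (prod_decode c))"
  let ?B = "\<lambda>xs. Suc (prod_encode (2 * nat \<bar>P xs\<bar>, 2 * nat \<bar>Q xs\<bar>))"
  let ?R = "\<lambda>c xs. 0 < ?den c \<and> coprime (nat \<bar>?num c\<bar>) (nat (?den c)) \<and>
      ?num c * Q xs = P xs * ?den c"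
  show "computable k (\<lambda>xs. rat_code (of_int (P xs) / of_int (Q xs)))"
  proof (rule computable_search[where B = ?B and P = ?R])
    show "computable k ?B"
      using P Q
      by (intro computable_intros computable_prod_encode computable_nat computable_int_abs)
    show "computable_pred (Suc k) (\<lambda>ys. ?R (hd ys) (tl ys))"
      using P Q by (intro computable_pred_conj computable_pred_int_less computable_pred_coprime
          computable_pred_int_eq computable_int_const computable_int_decode computable_prod_decode
          computable_hd computable_nat computable_int_abs computable_int_mult computable_int_shift)
        simp_all
    fix xs :: "nat list" and c :: nat
    assume "length xs = k"
    then have "Q xs \<noteq> 0" by (rule nonzero)
    then have "?R c xs \<longleftrightarrow> quotient_of (of_int (P xs) / of_int (Q xs)) = (?num c, ?den c)"
      by (auto simp: quotient_of_eq_iff frac_eq_eq simp flip: of_int_mult of_int_eq_iff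
          coprime_int_iff)
    then show "c < ?B xs \<and> ?R c xs \<longleftrightarrow> c = rat_code (of_int (P xs) / of_int (Q xs))"
      using rat_code_quotient_bound[OF \<open>Q xs \<noteq> 0\<close>, of "P xs"]
      by (auto simp: rat_code_eq_iff[symmetric])
  qed
qed

lemma computable_int_If:
  "computable_pred k B \<Longrightarrow> computable_int k I \<Longrightarrow> computable_int k J \<Longrightarrow>
    computable_int k (\<lambda>xs. if B xs then I xs else J xs)"
  unfolding computable_int_def using computable_If[of k B] by (simp add: if_distrib)

lemma computable_rat_quotient:
  assumes P: "computable_int k P" and Q: "computable_int k Q"
  shows "computable_rat k (\<lambda>xs. of_int (P xs) / of_int (Q xs))"
proof -
  let ?P = "\<lambda>xs. if Q xs = 0 then 0 else P xs" and ?Q = "\<lambda>xs. if Q xs = 0 then 1 else Q xs"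
  have "computable_rat k (\<lambda>xs. of_int (?P xs) / of_int (?Q xs))"
    using P Q by (intro computable_rat_quotient_nonzero computable_int_If computable_pred_int_eq
        computable_int_const) auto
  then show ?thesis by (rule computable_rat_cong) simp
qed

lemma computable_rat_num_den:
  assumes "computable_rat k R"
  shows "computable_int k (\<lambda>xs. fst (quotient_of (R xs)))"
    and "computable_int k (\<lambda>xs. snd (quotient_of (R xs)))"
  using computable_prod_decode[OF assms[unfolded computable_rat_def]]
  by (simp_all add: computable_int_def rat_code_def case_prod_beta)

lemma quotient_of_cases:
  obtains a b where "quotient_of r = (a, b)" "r = of_int a / of_int b" "0 < b"
  by (metis prod.collapse quotient_of_denom_pos' quotient_of_div)

lemma computable_rat_of_int: "computable_int k I \<Longrightarrow> computable_rat k (\<lambda>xs. of_int (I xs))"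
  using computable_rat_quotient[OF _ computable_int_const, of k I 1] by simp

lemma computable_rat_const: "computable_rat k (\<lambda>_. r)"
  unfolding computable_rat_def by (rule computable_const)

lemma rat_arith_via_quotient_of:
  fixes r s :: rat
  defines "a \<equiv> fst (quotient_of r)" and "b \<equiv> snd (quotient_of r)"
    and "c \<equiv> fst (quotient_of s)" and "d \<equiv> snd (quotient_of s)"
  shows "r + s = of_int (a * d + c * b) / of_int (b * d)"
    and "r * s = of_int (a * c) / of_int (b * d)"
    and "r / s = of_int (a * d) / of_int (b * c)"
    and "- r = of_int (- a) / of_int b"
proof -
  have r: "r = of_int a / of_int b" "0 < b" and s: "s = of_int c / of_int d" "0 < d"
    unfolding a_def b_def c_def d_def by (metis quotient_of_cases fst_conv snd_conv)+
  show "r + s = of_int (a * d + c * b) / of_int (b * d)"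
    unfolding r(1) s(1) using r(2) s(2) by (simp add: field_simps)
  show "r * s = of_int (a * c) / of_int (b * d)"
    unfolding r(1) s(1) by simp
  show "r / s = of_int (a * d) / of_int (b * c)"
    unfolding r(1) s(1) using r(2) s(2) by (cases "c = 0") (simp_all add: field_simps)
  show "- r = of_int (- a) / of_int b"
    unfolding r(1) by simp
qed

lemma computable_rat_add:
  assumes "computable_rat k R" "computable_rat k S"
  shows "computable_rat k (\<lambda>xs. R xs + S xs)"
proof -
  have "computable_rat k (\<lambda>xs.
      of_int (fst (quotient_of (R xs)) * snd (quotient_of (S xs)) +
        fst (quotient_of (S xs)) * snd (quotient_of (R xs))) /
      of_int (snd (quotient_of (R xs)) * snd (quotient_of (S xs))))"
    using assms
    by (intro computable_rat_quotient computable_int_add computable_int_mult computable_rat_num_den)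
  then show ?thesis by (rule computable_rat_cong) (rule rat_arith_via_quotient_of(1)[symmetric])
qed

lemma computable_rat_mult:
  assumes "computable_rat k R" "computable_rat k S"
  shows "computable_rat k (\<lambda>xs. R xs * S xs)"
proof -
  have "computable_rat k (\<lambda>xs.
      of_int (fst (quotient_of (R xs)) * fst (quotient_of (S xs))) /
      of_int (snd (quotient_of (R xs)) * snd (quotient_of (S xs))))"
    using assms by (intro computable_rat_quotient computable_int_mult computable_rat_num_den)
  then show ?thesis by (rule computable_rat_cong) (rule rat_arith_via_quotient_of(2)[symmetric])
qed

lemma computable_rat_divide:
  assumes "computable_rat k R" "computable_rat k S"
  shows "computable_rat k (\<lambda>xs. R xs / S xs)"
proof -
  have "computable_rat k (\<lambda>xs.
      of_int (fst (quotient_of (R xs)) * snd (quotient_of (S xs))) /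
      of_int (snd (quotient_of (R xs)) * fst (quotient_of (S xs))))"
    using assms by (intro computable_rat_quotient computable_int_mult computable_rat_num_den)
  then show ?thesis by (rule computable_rat_cong) (rule rat_arith_via_quotient_of(3)[symmetric])
qed

lemma computable_rat_minus:
  assumes "computable_rat k R"
  shows "computable_rat k (\<lambda>xs. - R xs)"
proof -
  have "computable_rat k (\<lambda>xs. of_int (- fst (quotient_of (R xs))) / of_int (snd (quotient_of (R xs))))"
    using assms by (intro computable_rat_quotient computable_int_minus computable_rat_num_den)
  then show ?thesis by (rule computable_rat_cong) (rule rat_arith_via_quotient_of(4)[symmetric])
qed

lemma computable_rat_diff:
  "computable_rat k R \<Longrightarrow> computable_rat k S \<Longrightarrow> computable_rat k (\<lambda>xs. R xs - S xs)"
  using computable_rat_add[OF _ computable_rat_minus, of k R S] by simp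

lemma rat_code_inject: "rat_code r = rat_code s \<longleftrightarrow> r = s"
  by (simp add: rat_code_def prod_eq_iff int_encode_eq flip: quotient_of_inject_eq)

lemma computable_pred_rat_eq:
  "computable_rat k R \<Longrightarrow> computable_rat k S \<Longrightarrow> computable_pred k (\<lambda>xs. R xs = S xs)"
  unfolding computable_rat_def by (drule (1) computable_pred_eq) (simp add: rat_code_inject)

lemma rat_pos_iff_num_pos: "0 < r \<longleftrightarrow> 0 < fst (quotient_of r)"
  by (metis quotient_of_cases fst_conv of_int_pos zero_less_divide_iff of_int_0_less_iff less_asym)

lemma computable_pred_rat_less:
  assumes "computable_rat k R" "computable_rat k S"
  shows "computable_pred k (\<lambda>xs. R xs < S xs)"
proof -
  have "computable_pred k (\<lambda>xs. 0 < fst (quotient_of (S xs - R xs)))"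
    using assms by (intro computable_pred_int_less computable_int_const computable_rat_num_den
        computable_rat_diff)
  then show ?thesis by (rule computable_pred_cong) (simp flip: rat_pos_iff_num_pos)
qed

definition rat_of_code :: "nat \<Rightarrow> rat" where
  "rat_of_code c =
     of_int (int_decode (fst (prod_decode c))) / of_int (int_decode (snd (prod_decode c)))"

lemma rat_of_code_rat_code [simp]: "rat_of_code (rat_code r) = r"
  by (metis quotient_of_cases rat_code_eq_iff rat_of_code_def fst_conv snd_conv)

lemma computable_rat_of_code: "computable k F \<Longrightarrow> computable_rat k (\<lambda>xs. rat_of_code (F xs))"
  unfolding rat_of_code_def
  by (intro computable_rat_quotient computable_int_decode computable_prod_decode)

section \<open>Digit expansions in base 1 / l\<close>

definition greedy_shift :: "real \<Rightarrow> real \<Rightarrow> real" where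
  "greedy_shift l x = (if x < 1 then x / l else (x - 1) / l)"

definition cantor_set :: "real \<Rightarrow> real set" where
  "cantor_set l = {x. \<exists>e. (\<forall>i. e i \<in> {0, 1}) \<and> (\<lambda>i. e i * l ^ i) sums x}"

lemma greedy_shift_expansion:
  assumes "0 < l"
  shows "x = (\<Sum>i<n. of_bool (1 \<le> (greedy_shift l ^^ i) x) * l ^ i) +
    l ^ n * (greedy_shift l ^^ n) x"
proof (induction n)
  case (Suc n)
  let ?y = "(greedy_shift l ^^ n) x"
  have "l ^ n * ?y = of_bool (1 \<le> ?y) * l ^ n + l ^ Suc n * greedy_shift l ?y"
    using assms by (auto simp: greedy_shift_def field_simps)
  then show ?case using Suc by simp
qed simp

lemma bounded_orbit_imp_cantor_set:
  assumes l: "0 < l" "l < 1" and orbit: "\<forall>n. (greedy_shift l ^^ n) x \<in> {0..1 / (1 - l)}"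
  shows "x \<in> cantor_set l"
proof -
  let ?e = "\<lambda>i. of_bool (1 \<le> (greedy_shift l ^^ i) x) :: real"
  have lower: "0 \<le> l ^ n * (greedy_shift l ^^ n) x" for n
    using orbit[rule_format, of n] l by simp
  have upper: "l ^ n * (greedy_shift l ^^ n) x \<le> l ^ n * (1 / (1 - l))" for n
    using orbit[rule_format, of n] l by (intro mult_left_mono) auto
  have "(\<lambda>n. l ^ n * (greedy_shift l ^^ n) x) \<longlonglongrightarrow> 0"
  proof (rule real_tendsto_sandwich[where f = "\<lambda>_. 0" and h = "\<lambda>n. l ^ n * (1 / (1 - l))"])
    show "(\<lambda>n. l ^ n * (1 / (1 - l))) \<longlonglongrightarrow> 0"
      using l by (intro tendsto_mult_left_zero LIMSEQ_power_zero) simp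
  qed (use lower upper in \<open>simp_all add: always_eventually\<close>)
  then have "(\<lambda>n. x - l ^ n * (greedy_shift l ^^ n) x) \<longlonglongrightarrow> x - 0"
    by (intro tendsto_diff tendsto_const)
  moreover have "(\<Sum>i<n. ?e i * l ^ i) = x - l ^ n * (greedy_shift l ^^ n) x" for n
    using greedy_shift_expansion[OF l(1), of x n] by linarith
  ultimately have "(\<lambda>i. ?e i * l ^ i) sums x" unfolding sums_def by simp
  then show ?thesis unfolding cantor_set_def by (intro CollectI exI[of _ ?e]) simp
qed

lemma cantor_set_subset_interval:
  assumes l: "0 < l" "l < 1" and x: "x \<in> cantor_set l"
  shows "x \<in> {0..1 / (1 - l)}"
proof -
  obtain e where e: "\<forall>i. e i \<in> {0, 1}" "(\<lambda>i. e i * l ^ i) sums x"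
    using x unfolding cantor_set_def by auto
  have terms: "0 \<le> e i * l ^ i" "e i * l ^ i \<le> l ^ i" for i
    using e(1)[rule_format, of i] l by auto
  have "0 \<le> x" by (rule sums_le[OF _ sums_zero e(2)]) (use terms in auto)
  moreover have "x \<le> 1 / (1 - l)"
    by (rule sums_le[OF _ e(2)]) (use terms geometric_sums[of l] l in auto)
  ultimately show ?thesis by simp
qed

lemma greedy_shift_interval:
  assumes l: "1 / 2 \<le> l" "l < 1" and x: "x \<in> {0..1 / (1 - l)}"
  shows "greedy_shift l x \<in> {0..1 / (1 - l)}"
proof (cases "x < 1")
  case True
  have "x / l \<le> 1 / l" using True l by (simp add: divide_right_mono)
  also have "1 / l \<le> 1 / (1 - l)" using l by (simp add: frac_le)
  finally show ?thesis using True x l by (simp add: greedy_shift_def)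
next
  case False
  have "(x - 1) / l \<le> (1 / (1 - l) - 1) / l" using x l by (simp add: divide_right_mono)
  also have "\<dots> = 1 / (1 - l)" using l by (simp add: field_simps)
  finally show ?thesis using False x l by (simp add: greedy_shift_def)
qed

lemma interval_subset_cantor_set:
  assumes l: "1 / 2 \<le> l" "l < 1" and x: "x \<in> {0..1 / (1 - l)}"
  shows "x \<in> cantor_set l"
proof (rule bounded_orbit_imp_cantor_set)
  show "\<forall>n. (greedy_shift l ^^ n) x \<in> {0..1 / (1 - l)}"
    by (intro allI, induct_tac n) (use x greedy_shift_interval[OF l] in auto)
qed (use l in auto)

lemma cantor_set_drop_digit:
  assumes "0 < l" "\<forall>i. e i \<in> {0, 1}" "(\<lambda>i. e i * l ^ i) sums x"
  shows "(x - e 0) / l \<in> cantor_set l"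
proof -
  have "(\<lambda>i. e (Suc i) * l ^ Suc i) sums (x - e 0)"
    using sums_Suc_iff[of "\<lambda>i. e i * l ^ i" "x - e 0"] assms(3) by simp
  then have "(\<lambda>i. e (Suc i) * l ^ Suc i / l) sums ((x - e 0) / l)"
    by (rule sums_divide)
  moreover have "e (Suc i) * l ^ Suc i / l = e (Suc i) * l ^ i" for i
    using assms(1) by simp
  ultimately have "(\<lambda>i. e (Suc i) * l ^ i) sums ((x - e 0) / l)" by simp
  then show ?thesis
    unfolding cantor_set_def using assms(2) by (intro CollectI exI[of _ "\<lambda>i. e (Suc i)"]) simp
qed

lemma greedy_shift_cantor_set:
  assumes l: "0 < l" "l < 1" and x: "x \<in> cantor_set l"
  shows "greedy_shift l x \<in> cantor_set l"
proof -
  obtain e where e: "\<forall>i. e i \<in> {0, 1}" "(\<lambda>i. e i * l ^ i) sums x"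
    using x unfolding cantor_set_def by auto
  define y where "y = (x - e 0) / l"
  have y: "y \<in> cantor_set l" unfolding y_def using cantor_set_drop_digit[OF l(1) e] .
  then have y_bounds: "0 \<le> y" "y \<le> 1 / (1 - l)" using cantor_set_subset_interval[OF l] by auto
  have x_eq: "x = e 0 + l * y" using l by (simp add: y_def)
  have "e 0 = 0 \<or> e 0 = 1" "0 \<le> l * y" using e(1) l y_bounds by auto
  then consider "x < 1" "e 0 = 0" | "1 \<le> x" "e 0 = 1" | "1 \<le> x" "e 0 = 0"
    using x_eq by fastforce
  then show ?thesis
  proof cases
    case 3
    \<comment> \<open>The digit 0 was used although 1 was possible: this forces \<open>l \<ge> 1/2\<close>.\<close>
    have "1 \<le> l * (1 / (1 - l))"
      using x_eq 3 mult_left_mono[OF y_bounds(2), of l] l by linarith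
    then have "1 - l \<le> l" using l by (simp add: le_divide_eq)
    then have "1 / 2 \<le> l" by simp
    with l show ?thesis
      using interval_subset_cantor_set greedy_shift_interval cantor_set_subset_interval[OF l x]
      by blast
  qed (use y x_eq l in \<open>auto simp: greedy_shift_def\<close>)
qed

theorem cantor_set_iff_bounded_orbit:
  assumes l: "0 < l" "l < 1"
  shows "x \<in> cantor_set l \<longleftrightarrow> (\<forall>n. (greedy_shift l ^^ n) x \<in> {0..1 / (1 - l)})"
proof
  assume "x \<in> cantor_set l"
  then have "(greedy_shift l ^^ n) x \<in> cantor_set l" for n
    by (induction n) (simp_all add: greedy_shift_cantor_set[OF l])
  then show "\<forall>n. (greedy_shift l ^^ n) x \<in> {0..1 / (1 - l)}"
    using cantor_set_subset_interval[OF l] by blast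
qed (rule bounded_orbit_imp_cantor_set[OF l])

lemma digit_sums_iff_cantor_set:
  assumes l: "0 < l" "l < 1" and "a \<noteq> b"
  shows "(\<exists>w. (\<forall>i. w i \<in> {a, b}) \<and> (\<lambda>i. w i * l ^ i) sums t) \<longleftrightarrow>
    (t - a / (1 - l)) / (b - a) \<in> cantor_set l"
proof -
  have geom: "(\<lambda>i. a * l ^ i) sums (a / (1 - l))"
    using sums_mult[OF geometric_sums[of l], of a] l by simp
  show ?thesis
  proof
    assume "\<exists>w. (\<forall>i. w i \<in> {a, b}) \<and> (\<lambda>i. w i * l ^ i) sums t"
    then obtain w where w: "\<forall>i. w i \<in> {a, b}" "(\<lambda>i. w i * l ^ i) sums t" by auto
    let ?e = "\<lambda>i. (w i - a) / (b - a)"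
    have "(\<lambda>i. (w i * l ^ i - a * l ^ i) / (b - a)) sums ((t - a / (1 - l)) / (b - a))"
      by (intro sums_divide sums_diff w(2) geom)
    moreover have "(w i * l ^ i - a * l ^ i) / (b - a) = ?e i * l ^ i" for i
      by (simp add: field_simps)
    moreover have "\<forall>i. ?e i \<in> {0, 1}" using w(1) \<open>a \<noteq> b\<close> by auto
    ultimately show "(t - a / (1 - l)) / (b - a) \<in> cantor_set l"
      unfolding cantor_set_def by (intro CollectI exI[of _ ?e]) simp
  next
    assume "(t - a / (1 - l)) / (b - a) \<in> cantor_set l"
    then obtain e where e: "\<forall>i. e i \<in> {0, 1}" "(\<lambda>i. e i * l ^ i) sums ((t - a / (1 - l)) / (b - a))"
      unfolding cantor_set_def by auto
    let ?w = "\<lambda>i. a + (b - a) * e i"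
    have "(\<lambda>i. a * l ^ i + (b - a) * (e i * l ^ i)) sums
        (a / (1 - l) + (b - a) * ((t - a / (1 - l)) / (b - a)))"
      by (intro sums_add geom sums_mult e(2))
    moreover have "a / (1 - l) + (b - a) * ((t - a / (1 - l)) / (b - a)) = t"
      using \<open>a \<noteq> b\<close> by simp
    moreover have "a * l ^ i + (b - a) * (e i * l ^ i) = ?w i * l ^ i" for i
      by (simp add: algebra_simps)
    moreover have "\<forall>i. ?w i \<in> {a, b}" using e(1) by force
    ultimately show "\<exists>w. (\<forall>i. w i \<in> {a, b}) \<and> (\<lambda>i. w i * l ^ i) sums t"
      by (intro exI[of _ ?w]) simp
  qed
qed

lemma digit_sums_constant:
  fixes l :: real
  assumes "0 < l" "l < 1"
  shows "(\<exists>w. (\<forall>i. w i \<in> {a, a}) \<and> (\<lambda>i. w i * l ^ i) sums t) \<longleftrightarrow> t = a / (1 - l)"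
proof -
  have "(\<lambda>i. a * l ^ i) sums (a / (1 - l))"
    using sums_mult[OF geometric_sums[of l], of a] assms by simp
  moreover have "(\<forall>i. w i \<in> {a, a}) \<longleftrightarrow> w = (\<lambda>_. a)" for w :: "nat \<Rightarrow> real" by auto
  ultimately show ?thesis using sums_unique2 by auto
qed

section \<open>The escape map\<close>

definition escape_map :: "real \<Rightarrow> real \<Rightarrow> real \<Rightarrow> real \<Rightarrow> real" where
  "escape_map l M N x =
     (if x < 0 then M + 1 - x
      else if x < 1 then x / l
      else if x \<le> 1 / (1 - l) then (x - 1) / l
      else if x < M then x + M
      else if x < M + 1 then M + N * (x - M)
      else x - 1)"

definition adic :: "real \<Rightarrow> real set" where
  "adic N = {x. \<exists>k. x * N ^ k \<in> \<int>}"

locale escape_system =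
  fixes l M N :: real
  assumes l: "0 < l" "l < 1"
    and M: "M \<in> \<int>" "1 / (1 - l) < M"
    and N: "N \<in> \<int>" "0 < N" "N / l \<in> \<int>"
begin

abbreviation "F \<equiv> escape_map l M N"

lemma escape_map_eq_greedy_shift: "x \<in> {0..1 / (1 - l)} \<Longrightarrow> F x = greedy_shift l x"
  by (auto simp: escape_map_def greedy_shift_def)

lemma one_le_inverse_one_minus: "1 \<le> 1 / (1 - l)"
  using l by simp

lemma escape_map_adic:
  assumes "x \<in> adic N"
  shows "F x \<in> adic N"
proof -
  obtain k where k: "x * N ^ k \<in> \<int>" using assms by (auto simp: adic_def)
  have Nk: "N ^ k \<in> \<int>" using N(1) by simp
  have "x / l * N ^ Suc k = (x * N ^ k) * (N / l)" by (simp add: ac_simps)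
  then have div: "x / l * N ^ Suc k \<in> \<int>" using Ints_mult[OF k N(3)] by metis
  have "1 / l * N ^ Suc k = N ^ k * (N / l)" by (simp add: ac_simps)
  then have "1 / l * N ^ Suc k \<in> \<int>" using Ints_mult[OF Nk N(3)] by metis
  with div have "(x - 1) / l * N ^ Suc k \<in> \<int>" by (simp add: diff_divide_distrib left_diff_distrib)
  moreover have "(M + 1 - x) * N ^ k \<in> \<int>" "(x + M) * N ^ k \<in> \<int>" "(x - 1) * N ^ k \<in> \<int>"
    "(M + N * (x - M)) * N ^ k \<in> \<int>"
    using k Nk M(1) N(1) by (simp_all add: algebra_simps)
  ultimately show ?thesis
    unfolding escape_map_def adic_def using div by (auto intro: exI[of _ k] exI[of _ "Suc k"])
qed

lemma escape_map_descend:
  assumes "M \<le> y" "(y - M) * N ^ k \<in> \<int>"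
  shows "\<exists>n. (F ^^ n) y < M + 1 \<and> M \<le> (F ^^ n) y \<and> ((F ^^ n) y - M) * N ^ k \<in> \<int>"
  using assms
proof (induction "nat \<lfloor>y - M\<rfloor>" arbitrary: y rule: less_induct)
  case less
  show ?case
  proof (cases "y < M + 1")
    case True
    then show ?thesis using less.prems by (intro exI[of _ 0]) simp
  next
    case False
    then have F: "F y = y - 1" using M one_le_inverse_one_minus by (auto simp: escape_map_def)
    have "nat \<lfloor>y - 1 - M\<rfloor> < nat \<lfloor>y - M\<rfloor>" using False by linarith
    moreover have "M \<le> y - 1" using False by simp
    moreover have "(y - 1 - M) * N ^ k = (y - M) * N ^ k - N ^ k"
      by (simp add: algebra_simps)
    then have "(y - 1 - M) * N ^ k \<in> \<int>"
      using Ints_diff[OF less.prems(2) Ints_power[OF N(1)]] by (simp only:)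
    ultimately obtain n where "(F ^^ n) (y - 1) < M + 1 \<and> M \<le> (F ^^ n) (y - 1) \<and>
        ((F ^^ n) (y - 1) - M) * N ^ k \<in> \<int>"
      using less.hyps by blast
    then show ?thesis
      using F by (intro exI[of _ "Suc n"]) (simp only: funpow_Suc_right comp_apply F)
  qed
qed

text \<open>Inside \<open>[M, M + 1)\<close> the map multiplies the distance to \<open>M\<close> by \<open>N\<close>, which lowers the
  power of \<open>N\<close> needed to make that distance an integer.\<close>
lemma escape_map_funnel:
  assumes "M \<le> y" "(y - M) * N ^ k \<in> \<int>"
  shows "\<exists>n. (F ^^ n) y = M"
  using assms
proof (induction k arbitrary: y)
  case 0
  obtain n where n: "(F ^^ n) y < M + 1" "M \<le> (F ^^ n) y" "(F ^^ n) y - M \<in> \<int>"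
    using escape_map_descend[OF 0] by auto
  from n(3) obtain z where z: "(F ^^ n) y - M = of_int z" by (auto elim: Ints_cases)
  with n(1,2) have "0 \<le> z" "z < 1" by linarith+
  then show ?case using z by (intro exI[of _ n]) simp
next
  case (Suc k)
  obtain n where n: "(F ^^ n) y < M + 1" "M \<le> (F ^^ n) y" "((F ^^ n) y - M) * N ^ Suc k \<in> \<int>"
    using escape_map_descend[OF Suc.prems] by auto
  let ?z = "(F ^^ n) y"
  have Fz: "F ?z = M + N * (?z - M)"
    using n(1,2) M one_le_inverse_one_minus by (auto simp: escape_map_def)
  have "M \<le> F ?z" using Fz n(2) N(2) by simp
  moreover have "(F ?z - M) * N ^ k = (?z - M) * N ^ Suc k"
    unfolding Fz by (simp add: algebra_simps)
  then have "(F ?z - M) * N ^ k \<in> \<int>" using n(3) by (simp only:)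
  ultimately obtain m where "(F ^^ m) (F ?z) = M" using Suc.IH by blast
  then have "(F ^^ (m + Suc n)) y = M" by (simp only: funpow_add funpow.simps(2) comp_apply)
  then show ?case by blast
qed

lemma escape_map_reaches_from_outside:
  assumes "x \<in> adic N" "x \<notin> {0..1 / (1 - l)}"
  shows "\<exists>n. (F ^^ n) x = M"
proof -
  have funnel: "\<exists>n. (F ^^ n) y = M" if "M \<le> y" "y \<in> adic N" for y
  proof -
    obtain k where "y * N ^ k \<in> \<int>" using \<open>y \<in> adic N\<close> by (auto simp: adic_def)
    then have "(y - M) * N ^ k \<in> \<int>" using M(1) N(1) by (simp add: left_diff_distrib)
    then show ?thesis using escape_map_funnel[OF \<open>M \<le> y\<close>] by blast
  qed
  show ?thesis
  proof (cases "M \<le> x")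
    case False
    then have "M \<le> F x" using assms(2) M one_le_inverse_one_minus by (auto simp: escape_map_def)
    then obtain n where "(F ^^ n) (F x) = M" using funnel escape_map_adic[OF assms(1)] by blast
    then have "(F ^^ Suc n) x = M" by (simp only: funpow_Suc_right comp_apply)
    then show ?thesis by blast
  qed (use funnel assms(1) in blast)
qed

theorem escape_map_reaches_iff:
  assumes "x \<in> adic N"
  shows "(\<exists>n. (F ^^ n) x = M) \<longleftrightarrow> (\<exists>n. (greedy_shift l ^^ n) x \<notin> {0..1 / (1 - l)})"
proof
  assume "\<exists>n. (F ^^ n) x = M"
  then obtain n where n: "(F ^^ n) x = M" by blast
  show "\<exists>n. (greedy_shift l ^^ n) x \<notin> {0..1 / (1 - l)}"
  proof (rule ccontr)
    assume "\<not> ?thesis"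
    then have inside: "(greedy_shift l ^^ n) x \<in> {0..1 / (1 - l)}" for n by blast
    have "(F ^^ n) x = (greedy_shift l ^^ n) x" for n
      by (induction n) (simp_all add: escape_map_eq_greedy_shift[OF inside])
    then show False using n inside[of n] M(2) by simp
  qed
next
  assume "\<exists>n. (greedy_shift l ^^ n) x \<notin> {0..1 / (1 - l)}"
  then obtain n where "(greedy_shift l ^^ n) x \<notin> {0..1 / (1 - l)}" by blast
  then show "\<exists>n. (F ^^ n) x = M"
    using assms
  proof (induction n arbitrary: x)
    case 0
    then show ?case using escape_map_reaches_from_outside by simp
  next
    case (Suc n)
    show ?case
    proof (cases "x \<in> {0..1 / (1 - l)}")
      case True
      then have "(greedy_shift l ^^ n) (F x) \<notin> {0..1 / (1 - l)}"
        using Suc.prems(1)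
        by (simp add: escape_map_eq_greedy_shift funpow_Suc_right del: funpow.simps)
      then obtain m where "(F ^^ m) (F x) = M"
        using Suc.IH escape_map_adic[OF Suc.prems(2)] by blast
      then have "(F ^^ Suc m) x = M" by (simp only: funpow_Suc_right comp_apply)
      then show ?thesis by blast
    qed (use escape_map_reaches_from_outside Suc.prems in blast)
  qed
qed

end

section \<open>The reduction\<close>

definition escape_sections :: "rat \<Rightarrow> rat \<Rightarrow> rat \<Rightarrow> pam_section list" where
  "escape_sections l M N =
     [(None, Some (0, False), -1, M + 1),
      (Some (0, True), Some (1, False), 1 / l, 0),
      (Some (1, True), Some (1 / (1 - l), True), 1 / l, - 1 / l),
      (Some (1 / (1 - l), False), Some (M, False), 1, M),
      (Some (M, True), Some (M + 1, False), N, M - N * M),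
      (Some (M + 1, True), None, 1, -1)]"

lemma pam_apply_escape_sections:
  "pam_apply (escape_sections l M N) = escape_map (of_rat l) (of_rat M) (of_rat N)"
proof
  fix x
  show "pam_apply (escape_sections l M N) x = escape_map (of_rat l) (of_rat M) (of_rat N) x"
    unfolding pam_apply_def escape_sections_def escape_map_def
    by (simp add: sec_set_def of_rat_add of_rat_mult of_rat_divide of_rat_diff of_rat_minus
        diff_divide_distrib algebra_simps)
qed

lemma pam_valid_escape_sections:
  assumes l: "0 < l" "l < 1" and M: "1 / (1 - l) < M" and N: "N \<noteq> 0"
  shows "pam_valid (escape_sections l M N)"
proof -
  let ?U = "of_rat (1 / (1 - l)) :: real" and ?M = "of_rat M :: real"
  have "(1 :: rat) \<le> 1 / (1 - l)" using l by simp
  then have "of_rat 1 \<le> ?U" by (simp only: of_rat_less_eq)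
  moreover have "?U < ?M" using M by (simp only: of_rat_less)
  ultimately have "1 \<le> ?U" "?U < ?M" by simp_all
  then have U: "x < 1 \<Longrightarrow> x \<le> ?U" "x \<le> ?U \<Longrightarrow> x < ?M" for x :: real by linarith+
  define idx where "idx x = (if x < 0 then 0 else if x < 1 then 1 else if x \<le> ?U then 2
    else if x < ?M then 3 else if x < ?M + 1 then 4 else 5 :: nat)" for x
  have idx: "x \<in> sec_set (escape_sections l M N ! i) \<longleftrightarrow> i = idx x" if "i < 6" for i x
  proof -
    have "i = 0 \<or> i = 1 \<or> i = 2 \<or> i = 3 \<or> i = 4 \<or> i = 5" using that by auto
    then show ?thesis
      by (elim disjE) (auto simp: escape_sections_def sec_set_def idx_def of_rat_add dest: U)
  qed
  have length: "length (escape_sections l M N) = 6" by (simp add: escape_sections_def)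
  have "idx x < 6" for x by (simp add: idx_def)
  then have "x \<in> sec_set (escape_sections l M N ! idx x)"
    and "escape_sections l M N ! idx x \<in> set (escape_sections l M N)"
    for x using idx length by simp_all
  then have cover: "(\<Union>s\<in>set (escape_sections l M N). sec_set s) = UNIV" by blast
  have disjoint: "sec_set (escape_sections l M N ! i) \<inter> sec_set (escape_sections l M N ! j) = {}"
    if "i < 6" "j < 6" "i \<noteq> j" for i j
    using idx[OF that(1)] idx[OF that(2)] that(3) by auto
  have slopes: "\<forall>s\<in>set (escape_sections l M N). fst (snd (snd s)) \<noteq> 0"
    using l N by (simp add: escape_sections_def)
  show ?thesis
    unfolding pam_valid_def length using cover disjoint slopes by blast
qed

lemma bound_code_inject: "bound_code x = bound_code y \<longleftrightarrow> x = y"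
  by (cases x; cases y) (auto simp: rat_code_inject split: if_splits)

lemma sec_code_inject: "sec_code x = sec_code y \<longleftrightarrow> x = y"
  by (cases x; cases y) (auto simp: sec_code_def list_encode_eq rat_code_inject bound_code_inject)

lemma reach_code_inject:
  "reach_code ss s t = reach_code ss' s' t' \<longleftrightarrow> ss = ss' \<and> s = s' \<and> t = t'"
proof -
  have "inj sec_code" by (simp add: inj_def sec_code_inject)
  then show ?thesis
    by (auto simp: reach_code_def list_encode_eq rat_code_inject inj_map_eq_map)
qed

lemma reach_code_mem_PAM_REACH:
  "reach_code ss s t \<in> PAM_REACH \<longleftrightarrow> pam_valid ss \<and> (\<exists>n. (pam_apply ss ^^ n) (of_rat s) = of_rat t)"
  unfolding PAM_REACH_def by (auto simp: reach_code_inject)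

definition tds_param :: "nat \<Rightarrow> nat \<Rightarrow> rat" where
  "tds_param n i = rat_of_code (list_code_nth n i)"

lemma tds_param_tds_code:
  "tds_param (tds_code l t a b) 0 = l" "tds_param (tds_code l t a b) 1 = t"
  "tds_param (tds_code l t a b) 2 = a" "tds_param (tds_code l t a b) 3 = b"
  by (simp_all add: tds_param_def tds_code_def list_code_nth_list_encode del: list_encode.simps)

lemma tds_code_inject:
  "tds_code l t a b = tds_code l' t' a' b' \<longleftrightarrow> l = l' \<and> t = t' \<and> a = a' \<and> b = b'"
  by (metis tds_param_tds_code)

lemma tds_code_mem_TDS: "tds_code l t a b \<in> TDS \<longleftrightarrow> tds_yes l t a b"
  unfolding TDS_def by (auto simp: tds_code_inject)

definition cantor_point :: "rat \<Rightarrow> rat \<Rightarrow> rat \<Rightarrow> rat \<Rightarrow> rat" where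
  "cantor_point l t a b = (t - a / (1 - l)) / (b - a)"

text \<open>With \<open>l = p / q\<close> in lowest terms, the target \<open>q + 1\<close> is an integer beyond
  \<open>1 / (1 - l) = q / (q - p)\<close>, and \<open>N = p * den S\<close> makes both the start point \<open>S\<close> and
  \<open>1 / l\<close> \<open>N\<close>-adic.\<close>
definition escape_instance :: "rat \<Rightarrow> rat \<Rightarrow> rat \<Rightarrow> rat \<Rightarrow> nat" where
  "escape_instance l t a b =
     (let S = cantor_point l t a b;
          M = of_int (snd (quotient_of l)) + 1;
          N = of_int (fst (quotient_of l) * snd (quotient_of S))
      in reach_code (escape_sections l M N) S M)"

lemma tds_yes_iff_cantor_point:
  assumes "0 < l" "l < 1" "a \<noteq> b"
  shows "tds_yes l t a b \<longleftrightarrow> of_rat (cantor_point l t a b) \<in> cantor_set (of_rat l)"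
proof -
  have "0 < (of_rat l :: real)" "of_rat l < (1 :: real)" "(of_rat a :: real) \<noteq> of_rat b"
    using assms by simp_all
  from digit_sums_iff_cantor_set[OF this, of "of_rat t"] assms show ?thesis
    by (simp add: tds_yes_def cantor_point_def of_rat_divide of_rat_diff)
qed

lemma escape_parameters:
  assumes l: "0 < l" "l < 1" and lq: "quotient_of l = (p, q)" and Sq: "quotient_of S = (s, d)"
  defines "M \<equiv> of_int q + 1 :: rat" and "N \<equiv> of_int (p * d) :: rat"
  shows "escape_system (of_rat l) (of_rat M) (of_rat N)"
    and "of_rat S \<in> adic (of_rat N)"
    and "pam_valid (escape_sections l M N)"
proof -
  have l_eq: "l = of_int p / of_int q" and q: "0 < q" using lq by (auto simp: quotient_of_eq_iff)
  have p: "0 < p" "p < q"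
    using l q unfolding l_eq by (simp_all add: zero_less_divide_iff divide_less_eq)
  have S_eq: "S = of_int s / of_int d" and d: "0 < d" using Sq by (auto simp: quotient_of_eq_iff)
  have "1 / (1 - l) = of_int q / of_int (q - p)"
    unfolding l_eq using q p by (simp add: field_simps)
  also have "\<dots> \<le> of_int q" using p by (simp add: divide_le_eq mult_le_cancel_left1)
  finally have M_gt: "1 / (1 - l) < M" by (simp add: M_def)
  have N_pos: "0 < N" using p d by (simp add: N_def)
  have "N / l = of_int (q * d)" unfolding l_eq using q p by (simp add: N_def field_simps)
  then have N_l: "of_rat N / of_rat l = (of_int (q * d) :: real)"
    by (metis of_rat_divide of_rat_of_int_eq)
  show "escape_system (of_rat l) (of_rat M) (of_rat N)"
  proof
    show "0 < (of_rat l :: real)" "(of_rat l :: real) < 1" "0 < (of_rat N :: real)"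
      using l N_pos by simp_all
    have "(of_rat (1 / (1 - l)) :: real) < of_rat M" using M_gt by (simp only: of_rat_less)
    then show "1 / (1 - of_rat l) < (of_rat M :: real)" by (simp add: of_rat_divide of_rat_diff)
    show "(of_rat M :: real) \<in> \<int>" "(of_rat N :: real) \<in> \<int>" "(of_rat N / of_rat l :: real) \<in> \<int>"
      using N_l by (simp_all add: M_def N_def of_rat_add of_rat_mult)
  qed
  have "S * N = of_int (s * p)" unfolding S_eq using d by (simp add: N_def field_simps)
  then have "of_rat S * of_rat N ^ 1 = (of_int (s * p) :: real)"
    by (metis of_rat_mult of_rat_of_int_eq power_one_right)
  then show "of_rat S \<in> adic (of_rat N)"
    unfolding adic_def by (metis (mono_tags) Ints_of_int mem_Collect_eq)
  show "pam_valid (escape_sections l M N)"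
    using l M_gt N_pos by (intro pam_valid_escape_sections) simp_all
qed

lemma escape_instance_mem_PAM_REACH:
  assumes l: "0 < l" "l < 1" and "a \<noteq> b"
  shows "escape_instance l t a b \<in> PAM_REACH \<longleftrightarrow> \<not> tds_yes l t a b"
proof -
  define S where "S = cantor_point l t a b"
  obtain p q s d where lq: "quotient_of l = (p, q)" and Sq: "quotient_of S = (s, d)"
    by fastforce
  define M :: rat where "M = of_int q + 1"
  define N :: rat where "N = of_int (p * d)"
  note parameters = escape_parameters[OF l lq Sq, folded M_def N_def]
  interpret escape_system "of_rat l" "of_rat M" "of_rat N" by (fact parameters(1))
  have "escape_instance l t a b = reach_code (escape_sections l M N) S M"
    by (simp add: escape_instance_def Let_def lq Sq M_def N_def flip: S_def)
  then have "escape_instance l t a b \<in> PAM_REACH \<longleftrightarrow>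
      (\<exists>n. (escape_map (of_rat l) (of_rat M) (of_rat N) ^^ n) (of_rat S) = of_rat M)"
    using parameters(3) by (simp add: reach_code_mem_PAM_REACH pam_apply_escape_sections)
  also have "\<dots> \<longleftrightarrow> \<not> (\<forall>n. (greedy_shift (of_rat l) ^^ n) (of_rat S) \<in> {0..1 / (1 - of_rat l)})"
    using escape_map_reaches_iff[OF parameters(2)] by simp
  also have "\<dots> \<longleftrightarrow> \<not> tds_yes l t a b"
    using cantor_set_iff_bounded_orbit tds_yes_iff_cantor_point[OF assms] l S_def by simp
  finally show ?thesis .
qed

definition tds_criterion :: "rat \<Rightarrow> rat \<Rightarrow> rat \<Rightarrow> rat \<Rightarrow> bool" where
  "tds_criterion l t a b \<longleftrightarrow> 0 < l \<and> l < 1 \<and>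
     (if a = b then t = a / (1 - l) else escape_instance l t a b \<notin> PAM_REACH)"

lemma tds_yes_iff_criterion: "tds_yes l t a b \<longleftrightarrow> tds_criterion l t a b"
proof (cases "0 < l \<and> l < 1")
  case l: True
  show ?thesis
  proof (cases "a = b")
    case True
    have "0 < (of_rat l :: real)" "(of_rat l :: real) < 1" using l by simp_all
    moreover have "(of_rat a / (1 - of_rat l) :: real) = of_rat (a / (1 - l))"
      by (simp add: of_rat_divide of_rat_diff)
    ultimately show ?thesis
      using l True digit_sums_constant by (simp add: tds_yes_def tds_criterion_def)
  qed (use l escape_instance_mem_PAM_REACH in \<open>auto simp: tds_criterion_def\<close>)
qed (auto simp: tds_yes_def tds_criterion_def)

text \<open>Re-encoding the decoded parameters tests whether \<open>n\<close> is a TDS code at all.\<close>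
lemma mem_TDS_iff:
  "n \<in> TDS \<longleftrightarrow> n = tds_code (tds_param n 0) (tds_param n 1) (tds_param n 2) (tds_param n 3) \<and>
    tds_criterion (tds_param n 0) (tds_param n 1) (tds_param n 2) (tds_param n 3)"
proof
  assume "n \<in> TDS"
  then obtain l t a b where "n = tds_code l t a b" "tds_yes l t a b" by (auto simp: TDS_def)
  then show "n = tds_code (tds_param n 0) (tds_param n 1) (tds_param n 2) (tds_param n 3) \<and>
    tds_criterion (tds_param n 0) (tds_param n 1) (tds_param n 2) (tds_param n 3)"
    using tds_param_tds_code[of l t a b] by (simp add: tds_yes_iff_criterion)
qed (metis tds_code_mem_TDS tds_yes_iff_criterion)

lemma computable_escape_sections:
  assumes "computable_rat k L" "computable_rat k M" "computable_rat k N"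
    "computable_rat k S" "computable_rat k T"
  shows "computable k (\<lambda>xs. reach_code (escape_sections (L xs) (M xs) (N xs)) (S xs) (T xs))"
  unfolding reach_code_def escape_sections_def
  by (simp add: sec_code_def)
    (intro computable_prod_encode computable_Suc computable_const computable_rat_code
      computable_rat_add computable_rat_diff computable_rat_mult computable_rat_divide
      computable_rat_minus computable_rat_const assms)

lemma computable_escape_instance:
  assumes "computable_rat k L" "computable_rat k T" "computable_rat k A" "computable_rat k B"
  shows "computable k (\<lambda>xs. escape_instance (L xs) (T xs) (A xs) (B xs))"
proof -
  have S: "computable_rat k (\<lambda>xs. cantor_point (L xs) (T xs) (A xs) (B xs))"
    unfolding cantor_point_def
    by (intro computable_rat_divide computable_rat_diff computable_rat_const assms)
  show ?thesis
    unfolding escape_instance_def Let_def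
    by (intro computable_escape_sections computable_rat_add computable_rat_of_int
        computable_int_mult computable_rat_num_den computable_rat_const S assms)
qed

lemma decidable_TDS_if_decidable_PAM_REACH:
  assumes "decidable PAM_REACH"
  shows "decidable TDS"
proof -
  have PAM: "computable_pred 1 (\<lambda>xs. hd xs \<in> PAM_REACH)"
    using assms by (simp add: decidable_iff_computable_pred)
  have param: "computable_rat 1 (\<lambda>xs. tds_param (hd xs) i)" for i
    unfolding tds_param_def
    by (intro computable_rat_of_code computable_list_code_nth computable_hd) simp
  have code: "computable 1 (\<lambda>xs. tds_code (tds_param (hd xs) 0) (tds_param (hd xs) 1)
      (tds_param (hd xs) 2) (tds_param (hd xs) 3))"
    unfolding tds_code_def
    by (simp del: One_nat_def)
      (intro computable_prod_encode computable_Suc computable_const computable_rat_code param)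
  have criterion: "computable_pred 1 (\<lambda>xs. tds_criterion (tds_param (hd xs) 0) (tds_param (hd xs) 1)
      (tds_param (hd xs) 2) (tds_param (hd xs) 3))"
    unfolding tds_criterion_def if_bool_eq_conj
    by (intro computable_pred_conj computable_pred_imp computable_pred_not computable_pred_rat_less
        computable_pred_rat_eq computable_rat_const computable_rat_divide computable_rat_diff param
        computable_pred_unop[OF PAM] computable_escape_instance)
  have "computable_pred 1 (\<lambda>xs. hd xs = tds_code (tds_param (hd xs) 0) (tds_param (hd xs) 1)
      (tds_param (hd xs) 2) (tds_param (hd xs) 3) \<and>
      tds_criterion (tds_param (hd xs) 0) (tds_param (hd xs) 1) (tds_param (hd xs) 2)
        (tds_param (hd xs) 3))"
    by (intro computable_pred_conj computable_pred_eq computable_hd code criterion) simp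
  then show ?thesis
    unfolding decidable_iff_computable_pred
    by (rule computable_pred_cong) (rule mem_TDS_iff[symmetric])
qed

theorem theorem32:
  shows "\<not> decidable TDS \<longrightarrow> \<not> decidable PAM_REACH"
  using decidable_TDS_if_decidable_PAM_REACH by blast

end
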